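(* Let $G$ be a compact group with Haar probability measure $dg$, acting linearly and continuously (i.e. via a continuous homomorphism $G\to GL(V)$) on a finite-dimensional real vector space $V$. Fix a vector $v\in V$ and a linear function $\ell:V\to\mathbb{R}$, and define $f:G\to\mathbb{R}$ by $f(g)=\ell(gv)$. Then $$\|f\|_2\le \|f\|_\infty\le \sqrt{\dim V}\,\|f\|_2 .$$
   Context: For a function $f:G\to\mathbb{R}$, $\|f\|_\infty=\max_{g\in G}|f(g)|$ and, for a positive integer $k$, $\|f\|_{2k}=\left(\int_G f^{2k}(g)\,dg\right)^{1/(2k)}$. *)

theory Defs
  imports "HOL-Analysis.Analysis" "HOL-Probability.Probability"
begin

definition compact_group ::
  "('g::t2_space \<Rightarrow> 'g \<Rightarrow> 'g) \<Rightarrow> ('g \<Rightarrow> 'g) \<Rightarrow> 'g \<Rightarrow> bool" where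
  "compact_group mul iv e \<longleftrightarrow>
     (\<forall>x y z. mul (mul x y) z = mul x (mul y z)) \<and>
     (\<forall>x. mul e x = x \<and> mul x e = x) \<and>
     (\<forall>x. mul (iv x) x = e \<and> mul x (iv x) = e) \<and>
     continuous_on UNIV (\<lambda>p. mul (fst p) (snd p)) \<and>
     continuous_on UNIV iv \<and>
     compact (UNIV :: 'g set)"

definition haar_probability ::
  "('g::t2_space \<Rightarrow> 'g \<Rightarrow> 'g) \<Rightarrow> 'g measure \<Rightarrow> bool" where
  "haar_probability mul M \<longleftrightarrow>
     prob_space M \<and> sets M = sets borel \<and>
     (\<forall>h A. A \<in> sets borel \<longrightarrow> emeasure M ((\<lambda>g. mul h g) ` A) = emeasure M A)"

definition continuous_representation ::
  "('g::t2_space \<Rightarrow> 'g \<Rightarrow> 'g) \<Rightarrow> 'g \<Rightarrow> ('g \<Rightarrow> ('v::euclidean_space \<Rightarrow>\<^sub>L 'v)) \<Rightarrow> bool" where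
  "continuous_representation mul e rho \<longleftrightarrow>
     (\<forall>g h. rho (mul g h) = rho g o\<^sub>L rho h) \<and> rho e = id_blinfun \<and>
     continuous_on UNIV rho"

definition sup_norm :: "('g \<Rightarrow> real) \<Rightarrow> real" where
  "sup_norm f = (SUP g. \<bar>f g\<bar>)"

definition Lp_norm_even :: "'g measure \<Rightarrow> nat \<Rightarrow> ('g \<Rightarrow> real) \<Rightarrow> real" where
  "Lp_norm_even M k f = (integral\<^sup>L M (\<lambda>g. f g ^ (2*k))) powr (1 / real (2*k))"

end

(*
  The matrix coefficients phi_u(g) = <u, rho(g) v> of the representation form a space of
  continuous functions on G which is invariant under left translation, and f is one of them.
  Take a family s_1, ..., s_n of coefficients that is orthonormal in L2(G) and maximal;
  linear independence gives n <= dim V.  By maximality every coefficient agrees with its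
  expansion in this family up to a coefficient of L2-norm zero, which vanishes identically
  because Haar measure charges every nonempty open set.  Cauchy-Schwarz therefore gives
  phi_u(g)^2 <= ||phi_u||_2^2 * K(g) with K = sum_i phi_(s_i)^2.  Translating the coefficient
  so that any prescribed point g0 is moved to g, and integrating over g, turns this into
  phi_u(g0)^2 <= ||phi_u||_2^2 * n, since K has integral n.  The other inequality only uses
  that Haar measure is a probability measure.
*)
theory Submission
  imports Defs
begin

section \<open>Positive semidefinite symmetric bilinear forms\<close>

locale semi_inner_form =
  fixes B :: "'v::euclidean_space \<Rightarrow> 'v \<Rightarrow> real"
  assumes bilinear: "bilinear B"
    and sym: "B x y = B y x"
    and nonneg: "0 \<le> B x x"
begin

lemma linear_left: "linear (\<lambda>x. B x y)"
  using bilinear by (simp add: bilinear_def)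

lemmas left_add = bilinear_ladd[OF bilinear]
  and left_diff = bilinear_lsub[OF bilinear]
  and left_scale = bilinear_lmul[OF bilinear, simplified]
  and right_scale = bilinear_rmul[OF bilinear, simplified]

lemma left_sum: "B (\<Sum>s\<in>S. f s) t = (\<Sum>s\<in>S. B (f s) t)"
  using linear_sum[OF linear_left] .

definition orthonormal_set :: "'v set \<Rightarrow> bool" where
  "orthonormal_set S \<longleftrightarrow>
     finite S \<and> (\<forall>s\<in>S. \<forall>t\<in>S. B s t = (if s = t then 1 else 0))"

definition maximal_orthonormal_set :: "'v set \<Rightarrow> bool" where
  "maximal_orthonormal_set S \<longleftrightarrow>
     orthonormal_set S \<and> (\<forall>T. orthonormal_set T \<longrightarrow> card T \<le> card S)"

lemma orthonormal_set_independent: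
  assumes "orthonormal_set S" shows "independent S"
proof
  assume "dependent S"
  then obtain a where a: "a \<in> S" "a \<in> span (S - {a})"
    unfolding dependent_def by blast
  have "finite (S - {a})"
    using assms by (simp add: orthonormal_set_def)
  then obtain c where c: "a = (\<Sum>x\<in>S - {a}. c x *\<^sub>R x)"
    using a(2) by (auto simp: span_finite)
  have "B a a = (\<Sum>x\<in>S - {a}. c x * B x a)"
    by (subst (1) c) (simp add: left_sum left_scale)
  also have "\<dots> = 0"
    using assms a(1) by (intro sum.neutral) (auto simp: orthonormal_set_def)
  finally show False
    using assms a(1) by (simp add: orthonormal_set_def)
qed

lemma card_orthonormal_set_le: "orthonormal_set S \<Longrightarrow> card S \<le> DIM('v)"
  using independent_bound orthonormal_set_independent by blast

lemma maximal_orthonormal_set_exists: "\<exists>S. maximal_orthonormal_set S"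
proof -
  have "orthonormal_set {}"
    by (simp add: orthonormal_set_def)
  moreover have "\<forall>T. orthonormal_set T \<longrightarrow> card T < Suc DIM('v)"
    using card_orthonormal_set_le by (simp add: less_Suc_eq_le)
  ultimately show ?thesis
    unfolding maximal_orthonormal_set_def by (rule ex_has_greatest_nat)
qed

lemma remainder_orthogonal:
  assumes "orthonormal_set S" and "t \<in> S"
  shows "B (u - (\<Sum>s\<in>S. B u s *\<^sub>R s)) t = 0"
proof -
  have "(\<Sum>s\<in>S. B u s * B s t) = (\<Sum>s\<in>S. if s = t then B u s else 0)"
    using assms by (intro sum.cong) (auto simp: orthonormal_set_def)
  also have "\<dots> = B u t"
    using assms by (simp add: orthonormal_set_def)
  finally have "(\<Sum>s\<in>S. B u s * B s t) = B u t" .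
  then show ?thesis
    by (simp add: left_diff left_sum left_scale)
qed

text \<open>If z were not isotropic, its normalisation could be added to S.\<close>
lemma isotropic_if_orthogonal_to_maximal:
  assumes S: "maximal_orthonormal_set S" and orth: "\<forall>t\<in>S. B z t = 0"
  shows "B z z = 0"
proof (rule ccontr)
  assume "B z z \<noteq> 0"
  then have pos: "B z z > 0"
    using nonneg[of z] by simp
  define z' where "z' = (1 / sqrt (B z z)) *\<^sub>R z"
  have z'_orth: "B z' t = 0" "B t z' = 0" if "t \<in> S" for t
    using orth that sym[of t z'] by (simp_all add: z'_def left_scale)
  have "B z' z' = B z z / (sqrt (B z z) * sqrt (B z z))"
    by (simp add: z'_def left_scale right_scale)
  then have z'_unit: "B z' z' = 1"
    using pos by simp
  then have "z' \<notin> S"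
    using z'_orth by force
  moreover have "orthonormal_set (insert z' S)"
    using S z'_orth z'_unit unfolding maximal_orthonormal_set_def orthonormal_set_def
    by (metis finite_insert insert_iff)
  ultimately have "card S < card (insert z' S)"
    using S by (simp add: maximal_orthonormal_set_def orthonormal_set_def)
  moreover have "card (insert z' S) \<le> card S"
    using S \<open>orthonormal_set (insert z' S)\<close> by (simp add: maximal_orthonormal_set_def)
  ultimately show False
    by simp
qed

text \<open>The remainder of u after expansion in S is isotropic and hence killed by L, so
  Cauchy-Schwarz applies to the expansion.\<close>
lemma linear_functional_square_le:
  assumes S: "maximal_orthonormal_set S" and "linear L"
    and kills_isotropic: "\<And>z. B z z = 0 \<Longrightarrow> L z = 0"
  shows "(L u)\<^sup>2 \<le> B u u * (\<Sum>s\<in>S. (L s)\<^sup>2)"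
proof -
  have ON: "orthonormal_set S"
    using S by (simp add: maximal_orthonormal_set_def)
  define z where "z = u - (\<Sum>s\<in>S. B u s *\<^sub>R s)"
  have z_orth: "B z t = 0" if "t \<in> S" for t
    using remainder_orthogonal[OF ON that] by (simp add: z_def)
  have "B z z = 0"
    using isotropic_if_orthogonal_to_maximal[OF S] z_orth by blast
  have u_eq: "u = z + (\<Sum>s\<in>S. B u s *\<^sub>R s)"
    by (simp add: z_def)
  have "L u = (\<Sum>s\<in>S. B u s * L s)"
    using kills_isotropic[OF \<open>B z z = 0\<close>] \<open>linear L\<close>
    by (subst u_eq) (simp add: linear_add linear_sum linear_scale)
  moreover have "B u u = (\<Sum>s\<in>S. (B u s)\<^sup>2)"
  proof -
    have "B z u = B u z"
      by (rule sym)
    also have "\<dots> = B z z + (\<Sum>s\<in>S. B u s * B s z)"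
      by (subst (1) u_eq) (simp add: left_add left_sum left_scale)
    also have "\<dots> = 0"
    proof -
      have "B s z = 0" if "s \<in> S" for s
        using z_orth[OF that] sym[of s z] by simp
      then show ?thesis
        using \<open>B z z = 0\<close> by simp
    qed
    finally have "B z u = 0" .
    have "B u u = B z u + (\<Sum>s\<in>S. B u s * B s u)"
      by (subst (1) u_eq) (simp add: left_add left_sum left_scale)
    also have "\<dots> = (\<Sum>s\<in>S. (B u s)\<^sup>2)"
    proof -
      have "B u s * B s u = (B u s)\<^sup>2" for s
        using sym[of s u] by (simp add: power2_eq_square)
      then show ?thesis
        using \<open>B z u = 0\<close> by simp
    qed
    finally show ?thesis .
  qed
  ultimately show ?thesis
    by (metis Cauchy_Schwarz_ineq_sum)
qed

end

section \<open>Haar measure on a compact group\<close>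

locale compact_haar_group =
  fixes mul :: "'g::t2_space \<Rightarrow> 'g \<Rightarrow> 'g" and iv :: "'g \<Rightarrow> 'g" and e :: 'g
    and M :: "'g measure"
  assumes compact_group: "compact_group mul iv e"
    and haar: "haar_probability mul M"
begin

lemma assoc: "mul (mul x y) z = mul x (mul y z)"
  and left_unit: "mul e x = x" and right_unit: "mul x e = x"
  and left_inverse: "mul (iv x) x = e" and right_inverse: "mul x (iv x) = e"
  and continuous_mul: "continuous_on UNIV (\<lambda>p. mul (fst p) (snd p))"
  and compact_UNIV: "compact (UNIV :: 'g set)"
  using compact_group unfolding compact_group_def by auto

lemma sets_M: "sets M = sets borel"
  and emeasure_left_translation:
    "A \<in> sets borel \<Longrightarrow> emeasure M (mul h ` A) = emeasure M A"
  using haar unfolding haar_probability_def by auto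

sublocale prob_space M
  using haar by (simp add: haar_probability_def)

lemma space_M: "space M = UNIV"
  using sets_eq_imp_space_eq[OF sets_M] by simp

lemma mul_cancel_left: "mul (iv h) (mul h x) = x" "mul h (mul (iv h) x) = x"
  by (simp_all add: assoc[symmetric] left_inverse right_inverse left_unit)

lemma vimage_left_translation: "mul h -` A = mul (iv h) ` A"
  by (auto simp: mul_cancel_left) (metis imageI mul_cancel_left(1))

lemma continuous_left_translation: "continuous_on UNIV (mul h)"
proof -
  have "continuous_on UNIV ((\<lambda>p. mul (fst p) (snd p)) \<circ> Pair h)"
    by (intro continuous_on_compose continuous_intros continuous_on_subset[OF continuous_mul]) auto
  then show ?thesis
    by (simp add: o_def)
qed

lemma borel_measurable_continuous: "continuous_on UNIV F \<Longrightarrow> F \<in> borel_measurable M"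
  using borel_measurable_continuous_onI measurable_cong_sets[OF sets_M refl] by blast

lemma measurable_left_translation: "mul h \<in> M \<rightarrow>\<^sub>M M"
  using borel_measurable_continuous_onI[OF continuous_left_translation]
    measurable_cong_sets[OF sets_M sets_M] by blast

lemma integrable_continuous:
  fixes F :: "'g \<Rightarrow> real"
  assumes "continuous_on UNIV F"
  shows "integrable M F"
proof -
  obtain C where "\<forall>x. norm (F x) \<le> C"
    using compact_imp_bounded[OF compact_continuous_image[OF assms compact_UNIV]]
    by (auto simp: bounded_iff)
  then show ?thesis
    by (intro integrable_const_bound[where B = C] borel_measurable_continuous assms) auto
qed

lemma distr_left_translation: "distr M M (mul h) = M"
proof (rule measure_eqI)
  fix A assume "A \<in> sets (distr M M (mul h))"
  then have "A \<in> sets borel"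
    using sets_M by simp
  then show "emeasure (distr M M (mul h)) A = emeasure M A"
    using emeasure_left_translation[of A "iv h"] measurable_left_translation
    by (simp add: emeasure_distr sets_M space_M vimage_left_translation)
qed simp

lemma integral_left_translation:
  fixes F :: "'g \<Rightarrow> real"
  assumes "F \<in> borel_measurable M"
  shows "(\<integral>g. F (mul h g) \<partial>M) = integral\<^sup>L M F"
  using integral_distr[OF measurable_left_translation, of F h] assms
  by (simp add: distr_left_translation)

text \<open>Finitely many translates of a nonempty open set cover the compact group.\<close>
lemma nonempty_open_not_null:
  assumes "open U" and "x \<in> U"
  shows "U \<notin> null_sets M"
proof
  assume U_null: "U \<in> null_sets M"
  have open_translate: "open (mul h -` U)" for h
    by (rule open_vimage[OF \<open>open U\<close> continuous_left_translation])
  have null_translate: "mul h -` U \<in> null_sets M" for h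
    using U_null emeasure_left_translation[of U "iv h"] open_translate[of h]
    by (auto simp: null_sets_def sets_M vimage_left_translation)
  have cover_all: "UNIV \<subseteq> (\<Union>h. mul h -` U)"
  proof
    fix g
    have "mul (mul x (iv g)) g = x"
      by (simp add: assoc left_inverse right_unit)
    then show "g \<in> (\<Union>h. mul h -` U)"
      using \<open>x \<in> U\<close> by (metis UNIV_I UN_I vimageI2)
  qed
  obtain C where "C \<subseteq> UNIV" "finite C" and cover: "UNIV \<subseteq> (\<Union>h\<in>C. mul h -` U)"
    by (rule compactE_image[OF compact_UNIV open_translate cover_all])
  have "(\<Union>h\<in>C. mul h -` U) \<in> null_sets M"
    using null_sets_UN'[OF countable_finite[OF \<open>finite C\<close>] null_translate] .
  then have "space M \<in> null_sets M"
    using cover space_M null_sets_subset[OF _ sets.top] by metis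
  then show False
    by (simp add: null_sets_def emeasure_space_1)
qed

lemma continuous_nonneg_integral_eq_0:
  fixes F :: "'g \<Rightarrow> real"
  assumes cont: "continuous_on UNIV F" and nonneg: "\<And>g. 0 \<le> F g"
    and integral_0: "integral\<^sup>L M F = 0"
  shows "F g = 0"
proof (rule ccontr)
  assume "F g \<noteq> 0"
  have "open (F -` {0<..})"
    using open_vimage[OF _ cont] by simp
  moreover have "AE x in M. F x = 0"
    using integral_nonneg_eq_0_iff_AE[OF integrable_continuous[OF cont]] nonneg integral_0
    by simp
  then have "AE x in M. x \<notin> F -` {0<..}"
    by (rule eventually_mono) simp
  with \<open>open (F -` {0<..})\<close> have "F -` {0<..} \<in> null_sets M"
    by (simp add: AE_iff_null_sets sets_M)
  moreover have "g \<in> F -` {0<..}"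
    using \<open>F g \<noteq> 0\<close> nonneg[of g] by simp
  ultimately show False
    using nonempty_open_not_null by blast
qed

end

section \<open>Matrix coefficients of a representation\<close>

lemma Lp_norm_even_1: "Lp_norm_even M 1 f = sqrt (\<integral>x. (f x)\<^sup>2 \<partial>M)"
  by (simp add: Lp_norm_even_def powr_half_sqrt power2_eq_square)

lemma (in prob_space) sqrt_integral_square_le_SUP_abs:
  fixes F :: "'a \<Rightarrow> real"
  assumes F: "F \<in> borel_measurable M" and bounded: "bdd_above (range (\<lambda>x. \<bar>F x\<bar>))"
  shows "sqrt (\<integral>x. (F x)\<^sup>2 \<partial>M) \<le> (SUP x. \<bar>F x\<bar>)"
proof -
  define C where "C = (SUP x. \<bar>F x\<bar>)"
  have le_C: "\<bar>F x\<bar> \<le> C" for x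
    unfolding C_def using bounded by (rule cSUP_upper[OF UNIV_I])
  then have "0 \<le> C"
    by (rule order_trans[OF abs_ge_zero])
  have square_le: "(F x)\<^sup>2 \<le> C\<^sup>2" for x
    using power_mono[OF le_C[of x], of 2] by simp
  have "(\<integral>x. (F x)\<^sup>2 \<partial>M) \<le> (\<integral>x. C\<^sup>2 \<partial>M)"
    using square_le F by (intro integral_mono integrable_const_bound[where B = "C\<^sup>2"]) auto
  also have "\<dots> = C\<^sup>2"
    by (simp add: prob_space)
  finally have "sqrt (\<integral>x. (F x)\<^sup>2 \<partial>M) \<le> sqrt (C\<^sup>2)"
    by (rule real_sqrt_le_mono)
  then show ?thesis
    using \<open>0 \<le> C\<close> by (simp add: C_def)
qed

locale haar_representation = compact_haar_group mul iv e M
  for mul :: "'g::t2_space \<Rightarrow> 'g \<Rightarrow> 'g" and iv e M +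
  fixes rho :: "'g \<Rightarrow> ('v::euclidean_space \<Rightarrow>\<^sub>L 'v)" and v :: 'v
  assumes representation: "continuous_representation mul e rho"
begin

lemma rho_mul: "rho (mul g h) = rho g o\<^sub>L rho h"
  and continuous_rho: "continuous_on UNIV rho"
  using representation unfolding continuous_representation_def by auto

definition matrix_coeff :: "'v \<Rightarrow> 'g \<Rightarrow> real" where
  "matrix_coeff u g = u \<bullet> rho g v"

definition gram :: "'v \<Rightarrow> 'v \<Rightarrow> real" where
  "gram u w = (\<integral>g. matrix_coeff u g * matrix_coeff w g \<partial>M)"

lemma continuous_matrix_coeff: "continuous_on UNIV (matrix_coeff u)"
  unfolding matrix_coeff_def by (intro continuous_intros continuous_rho)

lemma integrable_matrix_coeff_mult: "integrable M (\<lambda>g. matrix_coeff u g * matrix_coeff w g)"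
  by (intro integrable_continuous continuous_intros continuous_matrix_coeff)

lemma linear_matrix_coeff: "linear (\<lambda>u. matrix_coeff u g)"
  unfolding matrix_coeff_def by (intro linearI) (simp_all add: inner_add_left)

lemma gram_sym: "gram u w = gram w u"
  unfolding gram_def by (simp add: mult.commute)

lemma linear_gram_left: "linear (\<lambda>u. gram u w)"
proof (rule linearI)
  show "gram (x + y) w = gram x w + gram y w" for x y
    unfolding gram_def
    using integrable_matrix_coeff_mult[of x w] integrable_matrix_coeff_mult[of y w]
    by (simp add: matrix_coeff_def inner_add_left distrib_right)
  show "gram (c *\<^sub>R x) w = c *\<^sub>R gram x w" for c x
    unfolding gram_def by (simp add: matrix_coeff_def mult.assoc)
qed

sublocale gram: semi_inner_form gram
proof
  have "linear (gram u)" for u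
  proof -
    have "(\<lambda>w. gram w u) = gram u"
      by (rule ext) (rule gram_sym)
    then show ?thesis
      using linear_gram_left[of u] by simp
  qed
  then show "bilinear gram"
    using linear_gram_left by (simp add: bilinear_def)
  show "0 \<le> gram u u" for u
    unfolding gram_def by simp
qed (rule gram_sym)

lemma linear_rho: "linear (blinfun_apply (rho h))"
  by (rule bounded_linear.linear[OF blinfun.bounded_linear_right])

lemma matrix_coeff_adjoint:
  "matrix_coeff (adjoint (blinfun_apply (rho h)) u) g = matrix_coeff u (mul h g)"
proof -
  have "adjoint (blinfun_apply (rho h)) u \<bullet> rho g v = rho h (rho g v) \<bullet> u"
    using adjoint_works[OF linear_rho] by (simp add: inner_commute)
  then show ?thesis
    by (simp add: matrix_coeff_def rho_mul inner_commute)
qed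

lemma gram_adjoint:
  "gram (adjoint (blinfun_apply (rho h)) u) (adjoint (blinfun_apply (rho h)) u) = gram u u"
proof -
  have "(\<lambda>g. matrix_coeff u g * matrix_coeff u g) \<in> borel_measurable M"
    by (intro borel_measurable_continuous continuous_intros continuous_matrix_coeff)
  then show ?thesis
    unfolding gram_def matrix_coeff_adjoint by (rule integral_left_translation)
qed

lemma matrix_coeff_eq_0_if_isotropic:
  assumes "gram z z = 0"
  shows "matrix_coeff z g = 0"
proof -
  have cont: "continuous_on UNIV (\<lambda>g. matrix_coeff z g * matrix_coeff z g)"
    by (intro continuous_intros continuous_matrix_coeff)
  have nonneg: "0 \<le> matrix_coeff z g' * matrix_coeff z g'" for g'
    by simp
  have "(\<integral>g. matrix_coeff z g * matrix_coeff z g \<partial>M) = 0"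
    using assms unfolding gram_def .
  from continuous_nonneg_integral_eq_0[OF cont nonneg this]
  show ?thesis
    by simp
qed

text \<open>Translating by mul g0 (iv g) moves g0 to g without changing the L2-norm.\<close>
lemma matrix_coeff_square_le_kernel:
  assumes S: "gram.maximal_orthonormal_set S"
  shows "(matrix_coeff u g0)\<^sup>2 \<le> gram u u * (\<Sum>s\<in>S. (matrix_coeff s g)\<^sup>2)"
proof -
  define u' where "u' = adjoint (blinfun_apply (rho (mul g0 (iv g)))) u"
  have "matrix_coeff u g0 = matrix_coeff u' g"
    by (simp add: u'_def matrix_coeff_adjoint assoc left_inverse right_unit)
  moreover have "gram u' u' = gram u u"
    by (simp add: u'_def gram_adjoint)
  moreover have "(matrix_coeff u' g)\<^sup>2 \<le> gram u' u' * (\<Sum>s\<in>S. (matrix_coeff s g)\<^sup>2)"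
    using S linear_matrix_coeff matrix_coeff_eq_0_if_isotropic
    by (rule gram.linear_functional_square_le)
  ultimately show ?thesis
    by simp
qed

lemma matrix_coeff_square_le: "(matrix_coeff u g0)\<^sup>2 \<le> DIM('v) * gram u u"
proof -
  obtain S where S: "gram.maximal_orthonormal_set S"
    using gram.maximal_orthonormal_set_exists by blast
  then have ON: "gram.orthonormal_set S"
    by (simp add: gram.maximal_orthonormal_set_def)
  define K where "K g = (\<Sum>s\<in>S. (matrix_coeff s g)\<^sup>2)" for g
  have "(\<integral>g. K g \<partial>M) = (\<Sum>s\<in>S. gram s s)"
    unfolding K_def gram_def power2_eq_square
    by (intro Bochner_Integration.integral_sum integrable_matrix_coeff_mult)
  also have "\<dots> = card S"
    using ON by (simp add: gram.orthonormal_set_def)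
  finally have integral_K: "(\<integral>g. K g \<partial>M) = card S" .
  have "(matrix_coeff u g0)\<^sup>2 \<le> (\<integral>g. gram u u * K g \<partial>M)"
    using matrix_coeff_square_le_kernel[OF S] unfolding K_def
    by (intro integral_ge_const integrable_continuous continuous_intros continuous_matrix_coeff)
      auto
  also have "\<dots> = card S * gram u u"
    by (simp add: integral_K)
  also have "\<dots> \<le> DIM('v) * gram u u"
    using gram.card_orthonormal_set_le[OF ON] gram.nonneg by (intro mult_right_mono) auto
  finally show ?thesis .
qed

end

theorem theorem1p2:
  fixes mul :: "'g::t2_space \<Rightarrow> 'g \<Rightarrow> 'g" and iv :: "'g \<Rightarrow> 'g" and e :: 'g
    and M :: "'g measure"
    and rho :: "'g \<Rightarrow> ('v::euclidean_space \<Rightarrow>\<^sub>L 'v)"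
    and v :: 'v and l :: "'v \<Rightarrow> real" and f :: "'g \<Rightarrow> real"
  assumes "compact_group mul iv e"
    and "haar_probability mul M"
    and "continuous_representation mul e rho"
    and "linear l"
    and "\<And>g. f g = l (rho g v)"
  shows "Lp_norm_even M 1 f \<le> sup_norm f \<and>
         sup_norm f \<le> sqrt (real DIM('v)) * Lp_norm_even M 1 f"
proof -
  interpret haar_representation mul iv e M rho v
    using assms(1-3) by unfold_locales
  define u where "u = adjoint l 1"
  have f_eq: "f = matrix_coeff u"
  proof
    show "f g = matrix_coeff u g" for g
      using adjoint_works[OF assms(4), of "rho g v" 1] assms(5)[of g]
      by (simp add: matrix_coeff_def u_def inner_commute)
  qed
  have Lp_norm: "Lp_norm_even M 1 f = sqrt (gram u u)"
    unfolding Lp_norm_even_1 by (simp add: f_eq gram_def power2_eq_square)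
  have pointwise: "\<bar>f g\<bar> \<le> sqrt DIM('v) * Lp_norm_even M 1 f" for g
    unfolding Lp_norm using real_sqrt_le_mono[OF matrix_coeff_square_le[of u g]]
    by (simp add: f_eq real_sqrt_mult)
  then have "bdd_above (range (\<lambda>g. \<bar>f g\<bar>))"
    by (rule bdd_aboveI2)
  then have "Lp_norm_even M 1 f \<le> sup_norm f"
    unfolding Lp_norm_even_1 sup_norm_def
    by (rule sqrt_integral_square_le_SUP_abs[rotated])
      (simp add: f_eq borel_measurable_continuous continuous_matrix_coeff)
  moreover have "sup_norm f \<le> sqrt DIM('v) * Lp_norm_even M 1 f"
    unfolding sup_norm_def using pointwise by (rule cSUP_least[OF UNIV_not_empty])
  ultimately show ?thesis ..
qed

end
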